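(* Assume the setting and standing assumptions described in the context, and let $d>0$ with $\Xi\subset\Omega_d=\{z\in\mathbb{R}^{2n}:|z|<d\}$. Let $p\ge1$, $\epsilon>0$, and let $\delta_0,\dots,\delta_p\in\mathbb{R}$ satisfy: $\mathcal{L}_F^p\phi(z)\le\sum_{i=0}^{p-1}\delta_i\mathcal{L}_F^i\phi(z)+\delta_p$ for all $z\in\Omega_d$; $\delta_0\phi((x,0))+\delta_p\ge\epsilon$ for all $x\in\mathrm{Z}$; and $\delta_i\ge0$ for all $i$. Let $A$ be the $(p+1)\times(p+1)$ matrix with $A_{k,k+1}=1$ for $k=1,\dots,p-1$, $p$-th row $(\delta_0,\dots,\delta_{p-1},1)$, last row zero and other entries zero; $C=(1,0,\dots,0)$. Define $$\eta(x,0)=\big(\phi((x,0)),\max(\mathcal{L}_F\phi((x,0)),0),\dots,\max(\mathcal{L}_F^{p-1}\phi((x,0)),0),\delta_p\big)^\top,\qquad \eta_1(x,t)=Ce^{At}\eta(x,0).$$ Then for every $x\in\mathrm{Z}$, the map $t\mapsto\eta_1(x,t)$ is strictly increasing for $t>0$.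
   Context: Let $f:\mathbb{R}^n\times\mathbb{R}^m\to\mathbb{R}^n$ and a feedback law $\upsilon:\mathbb{R}^n\to\mathbb{R}^m$ be given. Define $F:\mathbb{R}^{2n}\to\mathbb{R}^{2n}$ by $F(z,e)=\big(f(z,\upsilon(z+e)),\,-f(z,\upsilon(z+e))\big)$. For $x\in\mathbb{R}^n$, $\xi(t;x)$ denotes the solution of $\dot\xi=F(\xi)$ with $\xi(0;x)=(x,0)$. A triggering function $\phi:\mathbb{R}^{2n}\to\mathbb{R}$ is given. $\mathcal{L}_F^k\phi$ denotes the $k$-th Lie derivative of $\phi$ along $F$ ($\mathcal{L}_F^0\phi=\phi$). Standing assumptions: (i) $F$ is smooth and homogeneous of degree $\alpha\ge1$ with all weights $1$, i.e. $F(\lambda\xi)=\lambda^{\alpha+1}F(\xi)$ for all $\lambda>0$; (ii) $\phi$ is smooth and homogeneous of degree $\theta\ge1$ with weights $1$, i.e. $\phi(\lambda\xi)=\lambda^{\theta+1}\phi(\xi)$ for all $\lambda>0$; (iii) for every $x\ne0$, $\phi((x,0))<0$ and there exists $t_x\in(0,\infty)$ with $\phi(\xi(t_x;x))=0$; (iv) compact sets $\mathrm{Z}\subset\mathbb{R}^n$, $\Xi\subset\mathbb{R}^{2n}$ containing a neighbourhood of the origin are given such that for all $x\in\mathrm{Z}$, $t\ge0$: $\phi(\xi(t;x))\le0\Rightarrow\xi(t;x)\in\Xi$; (v) the origin is the only equilibrium of $\dot\zeta=f(\zeta,\upsilon(\zeta))$. *)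

theory Defs
  imports "HOL-Analysis.Analysis"
begin

definition Fsys :: "(real^'n \<Rightarrow> real^'m \<Rightarrow> real^'n) \<Rightarrow> (real^'n \<Rightarrow> real^'m)
    \<Rightarrow> ((real^'n) \<times> (real^'n)) \<Rightarrow> ((real^'n) \<times> (real^'n))" where
  "Fsys f v = (\<lambda>(z, e). (f z (v (z + e)), - f z (v (z + e))))"

fun hderiv :: "('a::real_normed_vector \<Rightarrow> 'b::real_normed_vector) \<Rightarrow> 'a list \<Rightarrow> 'a \<Rightarrow> 'b" where
  "hderiv g [] = g"
| "hderiv g (v # vs) = (\<lambda>x. frechet_derivative (hderiv g vs) (at x) v)"

definition smooth_map :: "('a::real_normed_vector \<Rightarrow> 'b::real_normed_vector) \<Rightarrow> bool" where
  "smooth_map g \<longleftrightarrow> (\<forall>vs x. hderiv g vs differentiable (at x))"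

fun lie :: "('a::real_normed_vector \<Rightarrow> 'a) \<Rightarrow> ('a \<Rightarrow> real) \<Rightarrow> nat \<Rightarrow> 'a \<Rightarrow> real" where
  "lie F psi 0 = psi"
| "lie F psi (Suc k) = (\<lambda>x. frechet_derivative (lie F psi k) (at x) (F x))"

text \<open>N x N real matrices as functions on indices {0..<N}; product, power, exponential.\<close>
definition mmult :: "nat \<Rightarrow> (nat \<Rightarrow> nat \<Rightarrow> real) \<Rightarrow> (nat \<Rightarrow> nat \<Rightarrow> real) \<Rightarrow> nat \<Rightarrow> nat \<Rightarrow> real" where
  "mmult N A B = (\<lambda>i j. \<Sum>l<N. A i l * B l j)"

definition mpow :: "nat \<Rightarrow> (nat \<Rightarrow> nat \<Rightarrow> real) \<Rightarrow> nat \<Rightarrow> nat \<Rightarrow> nat \<Rightarrow> real" where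
  "mpow N A k = (mmult N A ^^ k) (\<lambda>i j. if i = j then 1 else 0)"

definition mexp :: "nat \<Rightarrow> (nat \<Rightarrow> nat \<Rightarrow> real) \<Rightarrow> nat \<Rightarrow> nat \<Rightarrow> real" where
  "mexp N A = (\<lambda>i j. \<Sum>k. mpow N A k i j / fact k)"

text \<open>The (p+1)x(p+1) matrix A, 0-based indices: A(k,k+1)=1 for k < p-1; row p-1 is
  (delta_0,...,delta_{p-1},1); row p is zero.\<close>
definition Amat :: "nat \<Rightarrow> (nat \<Rightarrow> real) \<Rightarrow> nat \<Rightarrow> nat \<Rightarrow> real" where
  "Amat p \<delta> = (\<lambda>i j.
     if i + 1 < p \<and> j = i + 1 then 1
     else if i = p - 1 \<and> j < p then \<delta> j
     else if i = p - 1 \<and> j = p then 1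
     else 0)"

definition Cvec :: "nat \<Rightarrow> real" where
  "Cvec = (\<lambda>j. if j = 0 then 1 else 0)"

text \<open>eta(x,0), 0-based components 0..p.\<close>
definition eta0 :: "((real^'n) \<times> (real^'n) \<Rightarrow> (real^'n) \<times> (real^'n)) \<Rightarrow> ((real^'n) \<times> (real^'n) \<Rightarrow> real)
    \<Rightarrow> nat \<Rightarrow> (nat \<Rightarrow> real) \<Rightarrow> real^'n \<Rightarrow> nat \<Rightarrow> real" where
  "eta0 F \<phi> p \<delta> x = (\<lambda>j. if j = 0 then \<phi> (x, 0)
                         else if j < p then max (lie F \<phi> j (x, 0)) 0
                         else \<delta> p)"

definition eta1 :: "((real^'n) \<times> (real^'n) \<Rightarrow> (real^'n) \<times> (real^'n)) \<Rightarrow> ((real^'n) \<times> (real^'n) \<Rightarrow> real)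
    \<Rightarrow> nat \<Rightarrow> (nat \<Rightarrow> real) \<Rightarrow> real^'n \<Rightarrow> real \<Rightarrow> real" where
  "eta1 F \<phi> p \<delta> x t =
     (\<Sum>i\<le>p. \<Sum>j\<le>p. Cvec i * mexp (p + 1) (\<lambda>a b. t * Amat p \<delta> a b) i j * eta0 F \<phi> p \<delta> x j)"

end

theory Submission
  imports Defs
begin

text \<open>Expanding the matrix exponential gives
  \<open>\<eta>\<^sub>1(x,t) = \<Sum>\<^sub>k (A\<^sup>k \<eta>)\<^sub>0 t\<^sup>k / k!\<close>, a power series in \<open>t\<close>.
  Since \<open>A\<close> is entrywise nonnegative and \<open>A \<eta> \<ge> 0\<close>, every coefficient with \<open>k \<ge> 1\<close> is
  nonnegative, and since the superdiagonal of \<open>A\<close> only shifts components,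
  \<open>(A\<^sup>p \<eta>)\<^sub>0 = (A \<eta>)\<^sub>p\<^sub>-\<^sub>1 = \<Sum>\<^sub>i\<^sub><\<^sub>p \<delta>\<^sub>i \<eta>\<^sub>i + \<delta>\<^sub>p \<ge> \<delta>\<^sub>0 \<phi>(x,0) + \<delta>\<^sub>p \<ge> \<epsilon> > 0\<close>.
  A power series with these coefficients is strictly increasing for \<open>t \<ge> 0\<close>.
  Only the sign information on \<open>\<eta>(x,0)\<close> and \<open>\<delta>\<close> is used.\<close>

definition mmult_vec :: "nat \<Rightarrow> (nat \<Rightarrow> nat \<Rightarrow> real) \<Rightarrow> (nat \<Rightarrow> real) \<Rightarrow> nat \<Rightarrow> real" where
  "mmult_vec N A w = (\<lambda>i. \<Sum>j<N. A i j * w j)"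

lemma mpow_0: "mpow N A 0 = (\<lambda>i j. if i = j then 1 else 0)"
  by (simp add: mpow_def)

lemma mpow_Suc: "mpow N A (Suc k) i j = (\<Sum>l<N. A i l * mpow N A k l j)"
  by (simp add: mpow_def mmult_def)

lemma mpow_scale: "mpow N (\<lambda>a b. t * A a b) k i j = t ^ k * mpow N A k i j"
proof (induction k arbitrary: i j)
  case 0
  then show ?case by (simp add: mpow_0)
next
  case (Suc k)
  then show ?case by (simp add: mpow_Suc sum_distrib_left algebra_simps)
qed

lemma mpow_mult_vec:
  assumes "i < N"
  shows "(\<Sum>j<N. mpow N A k i j * w j) = (mmult_vec N A ^^ k) w i"
  using assms
proof (induction k arbitrary: i)
  case 0
  have "(\<Sum>j<N. mpow N A 0 i j * w j) = (\<Sum>j<N. if j = i then w i else 0)"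
    by (intro sum.cong) (auto simp: mpow_0)
  with 0 show ?case by simp
next
  case (Suc k)
  have "(\<Sum>j<N. mpow N A (Suc k) i j * w j) = (\<Sum>j<N. \<Sum>l<N. A i l * (mpow N A k l j * w j))"
    by (simp add: mpow_Suc sum_distrib_right mult.assoc)
  also have "\<dots> = (\<Sum>l<N. A i l * (\<Sum>j<N. mpow N A k l j * w j))"
    by (subst sum.swap) (simp add: sum_distrib_left)
  also have "\<dots> = (\<Sum>l<N. A i l * (mmult_vec N A ^^ k) w l)"
    using Suc.IH by (intro sum.cong) auto
  also have "\<dots> = mmult_vec N A ((mmult_vec N A ^^ k) w) i"
    by (simp add: mmult_vec_def)
  finally show ?case by simp
qed

lemma mpow_abs_le:
  assumes "i < N"
  shows "\<bar>mpow N A k i j\<bar> \<le> (real N * (\<Sum>a<N. \<Sum>b<N. \<bar>A a b\<bar>)) ^ k"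
  using assms
proof (induction k arbitrary: i)
  case 0
  then show ?case by (simp add: mpow_0)
next
  case (Suc k)
  define S where "S = (\<Sum>a<N. \<Sum>b<N. \<bar>A a b\<bar>)"
  have entry: "\<bar>A i l\<bar> \<le> S" if "l < N" for l
  proof -
    have "\<bar>A i l\<bar> \<le> (\<Sum>b<N. \<bar>A i b\<bar>)"
      using that by (intro member_le_sum) auto
    also have "\<dots> \<le> S"
      unfolding S_def using Suc.prems by (intro member_le_sum[of i] sum_nonneg) auto
    finally show ?thesis .
  qed
  have "0 \<le> S"
    by (simp add: S_def sum_nonneg)
  have "\<bar>mpow N A (Suc k) i j\<bar> \<le> (\<Sum>l<N. \<bar>A i l\<bar> * \<bar>mpow N A k l j\<bar>)"
    unfolding mpow_Suc abs_mult[symmetric] by (rule sum_abs)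
  also have "\<dots> \<le> (\<Sum>l<N. S * (real N * S) ^ k)"
    using Suc.IH entry \<open>0 \<le> S\<close> unfolding S_def by (intro sum_mono mult_mono) auto
  finally show ?case by (simp add: S_def)
qed

lemma summable_mpow_fact:
  assumes "i < N"
  shows "summable (\<lambda>k. mpow N A k i j / fact k)"
proof (rule summable_comparison_test'[where N = 0])
  define M where "M = real N * (\<Sum>a<N. \<Sum>b<N. \<bar>A a b\<bar>)"
  show "summable (\<lambda>k. inverse (fact k) * M ^ k)"
    by (rule summable_exp)
  show "norm (mpow N A k i j / fact k) \<le> inverse (fact k) * M ^ k" for k
  proof -
    have "norm (mpow N A k i j / fact k) = \<bar>mpow N A k i j\<bar> / fact k"
      by simp
    also have "\<dots> \<le> M ^ k / fact k"
      unfolding M_def using mpow_abs_le[OF assms] by (rule divide_right_mono) simp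
    finally show ?thesis
      by (simp add: divide_inverse mult.commute)
  qed
qed

lemma mexp_mult_vec_power_series:
  fixes A :: "nat \<Rightarrow> nat \<Rightarrow> real" and w :: "nat \<Rightarrow> real"
  assumes "i < N"
  defines "c \<equiv> \<lambda>k. (mmult_vec N A ^^ k) w i / fact k"
  shows "(\<Sum>j<N. mexp N (\<lambda>a b. t * A a b) i j * w j) = (\<Sum>k. c k * t ^ k)"
    and "summable (\<lambda>k. c k * t ^ k)"
proof -
  let ?g = "\<lambda>j k. mpow N (\<lambda>a b. t * A a b) k i j / fact k * w j"
  have summable_g: "summable (?g j)" for j
    using summable_mpow_fact[OF assms(1)] by (rule summable_mult2)
  have sum_g: "(\<Sum>j<N. ?g j k) = c k * t ^ k" for k
  proof -
    have "(\<Sum>j<N. ?g j k) = t ^ k / fact k * (\<Sum>j<N. mpow N A k i j * w j)"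
      by (simp add: mpow_scale sum_distrib_left mult_ac)
    then show ?thesis
      by (simp add: mpow_mult_vec[OF assms(1)] c_def)
  qed
  have "(\<Sum>j<N. mexp N (\<lambda>a b. t * A a b) i j * w j) = (\<Sum>j<N. \<Sum>k. ?g j k)"
    using summable_mpow_fact[OF assms(1)] by (simp add: mexp_def suminf_mult2)
  also have "\<dots> = (\<Sum>k. \<Sum>j<N. ?g j k)"
    using summable_g by (rule suminf_sum[symmetric])
  finally show "(\<Sum>j<N. mexp N (\<lambda>a b. t * A a b) i j * w j) = (\<Sum>k. c k * t ^ k)"
    by (simp only: sum_g)
  show "summable (\<lambda>k. c k * t ^ k)"
    using summable_sum[of "{..<N}" ?g] summable_g by (simp only: sum_g)
qed

lemma eta1_power_series:
  fixes F :: "(real^'n) \<times> (real^'n) \<Rightarrow> (real^'n) \<times> (real^'n)"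
    and \<phi> :: "(real^'n) \<times> (real^'n) \<Rightarrow> real" and p :: nat and \<delta> :: "nat \<Rightarrow> real" and x :: "real^'n"
  defines "c \<equiv> \<lambda>k. (mmult_vec (Suc p) (Amat p \<delta>) ^^ k) (eta0 F \<phi> p \<delta> x) 0 / fact k"
  shows "eta1 F \<phi> p \<delta> x t = (\<Sum>k. c k * t ^ k)"
    and "summable (\<lambda>k. c k * t ^ k)"
proof -
  have "eta1 F \<phi> p \<delta> x t = (\<Sum>i\<le>p. if i = 0
      then (\<Sum>j\<le>p. mexp (Suc p) (\<lambda>a b. t * Amat p \<delta> a b) 0 j * eta0 F \<phi> p \<delta> x j) else 0)"
    unfolding eta1_def by (intro sum.cong) (auto simp: Cvec_def)
  also have "\<dots> = (\<Sum>j<Suc p. mexp (Suc p) (\<lambda>a b. t * Amat p \<delta> a b) 0 j * eta0 F \<phi> p \<delta> x j)"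
    by (simp add: lessThan_Suc_atMost)
  also have "\<dots> = (\<Sum>k. c k * t ^ k)"
    unfolding c_def by (rule mexp_mult_vec_power_series(1)) simp
  finally show "eta1 F \<phi> p \<delta> x t = (\<Sum>k. c k * t ^ k)" .
  show "summable (\<lambda>k. c k * t ^ k)"
    unfolding c_def by (rule mexp_mult_vec_power_series(2)) simp
qed

lemma strict_mono_on_power_series:
  fixes c :: "nat \<Rightarrow> real"
  assumes summable: "\<And>t. 0 \<le> t \<Longrightarrow> summable (\<lambda>k. c k * t ^ k)"
    and nonneg: "\<And>k. 1 \<le> k \<Longrightarrow> 0 \<le> c k"
    and "1 \<le> p" "0 < c p"
  shows "strict_mono_on {0..} (\<lambda>t. \<Sum>k. c k * t ^ k)"
proof (rule strict_mono_onI)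
  fix s t :: real
  assume "s \<in> {0..}" "t \<in> {0..}" "s < t"
  then have "0 \<le> s" "s < t" by auto
  have "0 < (\<Sum>k. c k * t ^ k - c k * s ^ k)"
  proof (rule suminf_pos2)
    show "summable (\<lambda>k. c k * t ^ k - c k * s ^ k)"
      using summable \<open>0 \<le> s\<close> \<open>s < t\<close> by (intro summable_diff) auto
    show "0 \<le> c k * t ^ k - c k * s ^ k" for k
      using nonneg[of k] power_mono[of s t k] \<open>0 \<le> s\<close> \<open>s < t\<close>
      by (cases k) (auto simp: mult_left_mono)
    show "0 < c p * t ^ p - c p * s ^ p"
      using power_strict_mono[of s t p] assms(3,4) \<open>0 \<le> s\<close> \<open>s < t\<close> by simp
  qed
  also have "\<dots> = (\<Sum>k. c k * t ^ k) - (\<Sum>k. c k * s ^ k)"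
    using summable \<open>0 \<le> s\<close> \<open>s < t\<close> by (intro suminf_diff[symmetric]) auto
  finally show "(\<Sum>k. c k * s ^ k) < (\<Sum>k. c k * t ^ k)"
    by simp
qed

lemma funpow_mmult_vec_nonneg:
  assumes "\<And>i j. 0 \<le> A i j" "\<And>j. 0 \<le> w j"
  shows "0 \<le> (mmult_vec N A ^^ k) w i"
proof (induction k arbitrary: i)
  case 0
  then show ?case using assms(2) by simp
next
  case (Suc k)
  then show ?case
    unfolding funpow.simps comp_apply mmult_vec_def
    by (intro sum_nonneg mult_nonneg_nonneg assms(1))
qed

lemma Amat_nonneg: "\<forall>j<p. 0 \<le> \<delta> j \<Longrightarrow> 0 \<le> Amat p \<delta> i j"
  by (auto simp: Amat_def)

lemma mmult_vec_Amat_superdiag: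
  assumes "i + 1 < p"
  shows "mmult_vec (Suc p) (Amat p \<delta>) w i = w (i + 1)"
proof -
  have "Amat p \<delta> i j * w j = (if j = i + 1 then w (i + 1) else 0)" for j
    using assms by (auto simp: Amat_def)
  then show ?thesis
    using assms by (simp add: mmult_vec_def)
qed

lemma mmult_vec_Amat_row_pred:
  assumes "1 \<le> p"
  shows "mmult_vec (Suc p) (Amat p \<delta>) w (p - 1) = (\<Sum>j<p. \<delta> j * w j) + w p"
proof -
  have "(\<Sum>j<p. Amat p \<delta> (p - 1) j * w j) = (\<Sum>j<p. \<delta> j * w j)"
    using assms by (intro sum.cong) (auto simp: Amat_def)
  moreover have "Amat p \<delta> (p - 1) p = 1"
    using assms by (simp add: Amat_def)
  ultimately show ?thesis
    by (simp add: mmult_vec_def)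
qed

lemma mmult_vec_Amat_last_rows:
  assumes "1 \<le> p" "p \<le> i"
  shows "mmult_vec (Suc p) (Amat p \<delta>) w i = 0"
proof -
  have "Amat p \<delta> i j = 0" for j
    using assms by (auto simp: Amat_def)
  then show ?thesis
    by (simp add: mmult_vec_def)
qed

lemma funpow_mmult_vec_Amat_shift:
  "m < p \<Longrightarrow> (mmult_vec (Suc p) (Amat p \<delta>) ^^ m) w (p - 1 - m) = w (p - 1)"
proof (induction m)
  case 0
  then show ?case by simp
next
  case (Suc m)
  have "(mmult_vec (Suc p) (Amat p \<delta>) ^^ Suc m) w (p - 1 - Suc m)
      = (mmult_vec (Suc p) (Amat p \<delta>) ^^ m) w (p - 1 - Suc m + 1)"
    using Suc.prems by (simp add: mmult_vec_Amat_superdiag)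
  also have "p - 1 - Suc m + 1 = p - 1 - m"
    using Suc.prems by simp
  finally show ?case
    using Suc by simp
qed

lemma funpow_mmult_vec_Amat_first:
  assumes "1 \<le> p"
  shows "(mmult_vec (Suc p) (Amat p \<delta>) ^^ p) w 0 = mmult_vec (Suc p) (Amat p \<delta>) w (p - 1)"
proof -
  let ?T = "mmult_vec (Suc p) (Amat p \<delta>)"
  obtain q where q: "p = Suc q"
    using assms by (cases p) auto
  have "(?T ^^ p) w 0 = (?T ^^ (p - 1)) (?T w) (p - 1 - (p - 1))"
    unfolding q by (simp only: funpow_Suc_right comp_apply) simp
  also have "\<dots> = ?T w (p - 1)"
    using assms by (intro funpow_mmult_vec_Amat_shift) simp
  finally show ?thesis .
qed

lemma mmult_vec_Amat_row_pred_ge: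
  assumes "1 \<le> p" "\<forall>j<p. 0 \<le> \<delta> j" "\<forall>j. 1 \<le> j \<and> j < p \<longrightarrow> 0 \<le> w j"
  shows "\<delta> 0 * w 0 + w p \<le> mmult_vec (Suc p) (Amat p \<delta>) w (p - 1)"
proof -
  have "(\<Sum>j<p. \<delta> j * w j) = \<delta> 0 * w 0 + (\<Sum>j\<in>{1..<p}. \<delta> j * w j)"
    using assms(1) by (simp add: lessThan_atLeast0 sum.atLeast_Suc_lessThan)
  moreover have "0 \<le> (\<Sum>j\<in>{1..<p}. \<delta> j * w j)"
    using assms(2,3) by (intro sum_nonneg) auto
  ultimately show ?thesis
    using mmult_vec_Amat_row_pred[OF assms(1)] by simp
qed

lemma funpow_mmult_vec_Amat_sign:
  assumes p: "1 \<le> p"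
    and \<delta>: "\<forall>j\<le>p. 0 \<le> \<delta> j"
    and w: "\<forall>j. 1 \<le> j \<and> j \<le> p \<longrightarrow> 0 \<le> w j"
    and "0 < \<delta> 0 * w 0 + w p"
  shows "1 \<le> k \<Longrightarrow> 0 \<le> (mmult_vec (Suc p) (Amat p \<delta>) ^^ k) w i"
    and "0 < (mmult_vec (Suc p) (Amat p \<delta>) ^^ p) w 0"
proof -
  let ?T = "mmult_vec (Suc p) (Amat p \<delta>)"
  have row_pred: "0 < ?T w (p - 1)"
  proof -
    have "\<forall>j<p. 0 \<le> \<delta> j" "\<forall>j. 1 \<le> j \<and> j < p \<longrightarrow> 0 \<le> w j"
      using \<delta> w by auto
    then show ?thesis
      using mmult_vec_Amat_row_pred_ge[OF p] assms(4) by (meson less_le_trans)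
  qed
  have Tw_nonneg: "0 \<le> ?T w i" for i
    using row_pred mmult_vec_Amat_superdiag[of i p] mmult_vec_Amat_last_rows[OF p, of i] w
    by (cases "i + 1 < p"; cases "i = p - 1") auto
  have A_nonneg: "0 \<le> Amat p \<delta> i j" for i j
    using \<delta> by (intro Amat_nonneg) auto
  show "0 \<le> (?T ^^ k) w i" if "1 \<le> k"
  proof -
    obtain m where "k = Suc m"
      using \<open>1 \<le> k\<close> by (cases k) auto
    then show ?thesis
      using funpow_mmult_vec_nonneg[where A = "Amat p \<delta>" and w = "?T w", OF A_nonneg Tw_nonneg]
      by (simp only: funpow_Suc_right comp_apply)
  qed
  show "0 < (?T ^^ p) w 0"
    using row_pred funpow_mmult_vec_Amat_first[OF p] by simp
qed

theorem proposition5: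
  fixes f :: "real^'n \<Rightarrow> real^'m \<Rightarrow> real^'n"
    and \<upsilon> :: "real^'n \<Rightarrow> real^'m"
    and \<xi> :: "real^'n \<Rightarrow> real \<Rightarrow> (real^'n) \<times> (real^'n)"
    and \<phi> :: "(real^'n) \<times> (real^'n) \<Rightarrow> real"
    and \<alpha> \<theta> d \<epsilon> :: real
    and Z :: "(real^'n) set" and \<Xi> :: "((real^'n) \<times> (real^'n)) set"
    and p :: nat and \<delta> :: "nat \<Rightarrow> real"
  defines "F \<equiv> Fsys f \<upsilon>"
  assumes F_smooth: "smooth_map F"
    and \<alpha>: "\<alpha> \<ge> 1"
    and F_hom: "\<forall>c>0. \<forall>w. F (c *\<^sub>R w) = (c powr (\<alpha> + 1)) *\<^sub>R F w"
    and \<phi>_smooth: "smooth_map \<phi>"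
    and \<theta>: "\<theta> \<ge> 1"
    and \<phi>_hom: "\<forall>c>0. \<forall>w. \<phi> (c *\<^sub>R w) = (c powr (\<theta> + 1)) * \<phi> w"
    and \<xi>_init: "\<forall>x. \<xi> x 0 = (x, 0)"
    and \<xi>_ode: "\<forall>x. \<forall>t\<ge>0. (\<xi> x has_vector_derivative F (\<xi> x t)) (at t within {0..})"
    and trig: "\<forall>x. x \<noteq> 0 \<longrightarrow> \<phi> (x, 0) < 0 \<and> (\<exists>t>0. \<phi> (\<xi> x t) = 0)"
    and Z: "compact Z" "0 \<in> interior Z"
    and \<Xi>: "compact \<Xi>" "0 \<in> interior \<Xi>"
    and inv: "\<forall>x\<in>Z. \<forall>t\<ge>0. \<phi> (\<xi> x t) \<le> 0 \<longrightarrow> \<xi> x t \<in> \<Xi>"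
    and equil: "\<forall>\<zeta>. f \<zeta> (\<upsilon> \<zeta>) = 0 \<longleftrightarrow> \<zeta> = 0"
    and d: "d > 0" "\<Xi> \<subseteq> ball 0 d"
    and p: "p \<ge> 1" and \<epsilon>: "\<epsilon> > 0"
    and bound: "\<forall>z\<in>ball 0 d. lie F \<phi> p z \<le> (\<Sum>i<p. \<delta> i * lie F \<phi> i z) + \<delta> p"
    and pos: "\<forall>x\<in>Z. \<delta> 0 * \<phi> (x, 0) + \<delta> p \<ge> \<epsilon>"
    and \<delta>_nonneg: "\<forall>i\<le>p. \<delta> i \<ge> 0"
  shows "\<forall>x\<in>Z. strict_mono_on {0<..} (eta1 F \<phi> p \<delta> x)"
proof
  fix x assume "x \<in> Z"
  define \<eta> where "\<eta> = eta0 F \<phi> p \<delta> x"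
  define c where "c = (\<lambda>k. (mmult_vec (Suc p) (Amat p \<delta>) ^^ k) \<eta> 0 / fact k)"
  have \<eta>_nonneg: "\<forall>j. 1 \<le> j \<and> j \<le> p \<longrightarrow> 0 \<le> \<eta> j"
    using \<delta>_nonneg by (auto simp: \<eta>_def eta0_def)
  have \<eta>_pos: "0 < \<delta> 0 * \<eta> 0 + \<eta> p"
    using pos \<open>x \<in> Z\<close> \<epsilon> p by (auto simp: \<eta>_def eta0_def)
  note sign = funpow_mmult_vec_Amat_sign[OF p \<delta>_nonneg \<eta>_nonneg \<eta>_pos]
  have "strict_mono_on {0..} (\<lambda>t. \<Sum>k. c k * t ^ k)"
  proof (rule strict_mono_on_power_series[OF _ _ p])
    show "summable (\<lambda>k. c k * t ^ k)" for t
      unfolding c_def \<eta>_def by (rule eta1_power_series(2))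
  qed (use sign in \<open>auto simp: c_def\<close>)
  moreover have "eta1 F \<phi> p \<delta> x = (\<lambda>t. \<Sum>k. c k * t ^ k)"
    unfolding c_def \<eta>_def using eta1_power_series(1) by blast
  ultimately show "strict_mono_on {0<..} (eta1 F \<phi> p \<delta> x)"
    by (auto intro: monotone_on_subset)
qed

end
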